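(* Let $H$ be obtained from a graph $G$ on vertices $v_1,\dots,v_k$ by expanding each $v_i$ by the graph $M_i=(V_i,E_i)$. Let $\Omega$ be a potential maximal clique of $H$, and suppose some $V_i$ intersects $\Omega$ but is not contained in $\Omega$. Then $\Omega\cap V_i$ is a potential maximal clique of $M_i$ and $\Omega\setminus V_i=N_H(V_i)$.
   Context: Expansion: given a graph $G$ on vertices $v_1,\dots,v_k$ and pairwise disjoint graphs $M_i=(V_i,E_i)$, the graph $H$ obtained by expanding each $v_i$ by $M_i$ has vertex set $V_1\cup\dots\cup V_k$ and edge set $E_1\cup\dots\cup E_k\cup\{ab \mid a\in V_i, b\in V_j, v_iv_j\in E(G)\}$. $N_H(X)$ denotes the set of vertices outside $X$ adjacent in $H$ to some vertex of $X$. A graph is chordal if every cycle of length at least 4 has a chord; a minimal triangulation of a graph $F$ is a chordal supergraph on the same vertex set such that no proper subset of its edge set containing $E(F)$ gives a chordal graph. A potential maximal clique of $F$ is a vertex set that is a maximal clique of some minimal triangulation of $F$. *)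

theory Defs
  imports Main
begin

definition graph :: "'a set \<Rightarrow> 'a set set \<Rightarrow> bool" where
  "graph V E \<longleftrightarrow> finite V \<and> (\<forall>e\<in>E. e \<subseteq> V \<and> card e = 2)"

definition chordal :: "'a set \<Rightarrow> 'a set set \<Rightarrow> bool" where
  "chordal V E \<longleftrightarrow>
    (\<forall>xs. distinct xs \<and> length xs \<ge> 4 \<and> set xs \<subseteq> V \<and>
          (\<forall>i < length xs. {xs ! i, xs ! ((i + 1) mod length xs)} \<in> E)
      \<longrightarrow> (\<exists>i < length xs. \<exists>j < length xs. i \<noteq> j \<and>
              j \<noteq> (i + 1) mod length xs \<and> i \<noteq> (j + 1) mod length xs \<and>
              {xs ! i, xs ! j} \<in> E))"

definition minimal_triangulation :: "'a set \<Rightarrow> 'a set set \<Rightarrow> 'a set set \<Rightarrow> bool" where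
  "minimal_triangulation V E F \<longleftrightarrow>
    graph V F \<and> E \<subseteq> F \<and> chordal V F \<and>
    (\<forall>F'. E \<subseteq> F' \<and> F' \<subset> F \<longrightarrow> \<not> chordal V F')"

definition clique :: "'a set \<Rightarrow> 'a set set \<Rightarrow> 'a set \<Rightarrow> bool" where
  "clique V E K \<longleftrightarrow> K \<subseteq> V \<and> (\<forall>x\<in>K. \<forall>y\<in>K. x \<noteq> y \<longrightarrow> {x, y} \<in> E)"

definition maximal_clique :: "'a set \<Rightarrow> 'a set set \<Rightarrow> 'a set \<Rightarrow> bool" where
  "maximal_clique V E K \<longleftrightarrow> clique V E K \<and> (\<forall>K'. clique V E K' \<and> K \<subseteq> K' \<longrightarrow> K' = K)"

definition potential_maximal_clique :: "'a set \<Rightarrow> 'a set set \<Rightarrow> 'a set \<Rightarrow> bool" where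
  "potential_maximal_clique V E \<Omega> \<longleftrightarrow>
    (\<exists>F. minimal_triangulation V E F \<and> maximal_clique V F \<Omega>)"

definition nbhd :: "'a set \<Rightarrow> 'a set set \<Rightarrow> 'a set \<Rightarrow> 'a set" where
  "nbhd V E X = {v \<in> V - X. \<exists>x\<in>X. {x, v} \<in> E}"

text \<open>Expansion of G = (I, EG) where vertex i is replaced by M_i = (Vs i, Es i).\<close>
definition expand_V :: "'i set \<Rightarrow> ('i \<Rightarrow> 'a set) \<Rightarrow> 'a set" where
  "expand_V I Vs = (\<Union>i\<in>I. Vs i)"

definition expand_E :: "'i set \<Rightarrow> 'i set set \<Rightarrow> ('i \<Rightarrow> 'a set) \<Rightarrow> ('i \<Rightarrow> 'a set set) \<Rightarrow> 'a set set" where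
  "expand_E I EG Vs Es = (\<Union>i\<in>I. Es i) \<union>
     {{a, b} | a b i j. i \<in> I \<and> j \<in> I \<and> a \<in> Vs i \<and> b \<in> Vs j \<and> {i, j} \<in> EG}"

end

theory Submission
  imports Defs
begin

text \<open>
  The proof does not use the expansion structure beyond two facts: each part V_i is a module
  of the expanded graph H (all vertices of V_i have the same neighbours outside V_i), and
  H induces M_i on V_i. So we prove the statement for an arbitrary module M of a graph
  (V, E). Fix a minimal triangulation F with maximal clique \<Omega> meeting M but not containing M.

  If M were a clique of F, then dropping from F all edges between M and vertices outside the
  common F-neighbourhood T of M leaves a chordal graph containing E; by minimality F has no
  such edges, so every vertex of \<Omega> outside M lies in T, and \<Omega> could be extended by M.
  Hence two vertices of M are non-adjacent in F, which forces the neighbourhood N of M to be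
  a clique of F (two non-adjacent vertices of N would give a chordless 4-cycle). Gluing the
  part of F outside M to any chordal graph on M along all M-N edges is then chordal, so by
  minimality F is exactly such a gluing, its part inside M is a minimal triangulation of
  the subgraph induced by M, and \<Omega> splits into N and a maximal clique of that part.
\<close>

section \<open>Cycles and chords\<close>

definition is_cycle :: "'a set \<Rightarrow> 'a set set \<Rightarrow> 'a list \<Rightarrow> bool" where
  "is_cycle V F xs \<longleftrightarrow> distinct xs \<and> length xs \<ge> 4 \<and> set xs \<subseteq> V \<and>
     (\<forall>i < length xs. {xs ! i, xs ! ((i + 1) mod length xs)} \<in> F)"

definition has_chord :: "'a set set \<Rightarrow> 'a list \<Rightarrow> bool" where
  "has_chord F xs \<longleftrightarrow> (\<exists>i < length xs. \<exists>j < length xs. i \<noteq> j \<and>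
     j \<noteq> (i + 1) mod length xs \<and> i \<noteq> (j + 1) mod length xs \<and> {xs ! i, xs ! j} \<in> F)"

lemma chordal_iff_cycles: "chordal V F \<longleftrightarrow> (\<forall>xs. is_cycle V F xs \<longrightarrow> has_chord F xs)"
  by (auto simp: chordal_def is_cycle_def has_chord_def)

lemma has_chordI:
  "\<lbrakk>i < length xs; j < length xs; i \<noteq> j; j \<noteq> (i + 1) mod length xs;
    i \<noteq> (j + 1) mod length xs; {xs ! i, xs ! j} \<in> F\<rbrakk> \<Longrightarrow> has_chord F xs"
  unfolding has_chord_def by blast

lemma has_chord_mono: "has_chord F xs \<Longrightarrow> F \<subseteq> G \<Longrightarrow> has_chord G xs"
  unfolding has_chord_def by blast

lemma is_cycle_edge: "is_cycle V F xs \<Longrightarrow> i < length xs \<Longrightarrow> {xs ! i, xs ! ((i + 1) mod length xs)} \<in> F"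
  unfolding is_cycle_def by blast

lemma is_cycle_length: "is_cycle V F xs \<Longrightarrow> length xs \<ge> 4"
  unfolding is_cycle_def by blast

lemma is_cycle_edge_first:
  assumes "is_cycle V F xs" shows "{xs ! 0, xs ! 1} \<in> F"
proof -
  have "0 < length xs" "(0 + 1) mod length xs = 1"
    using is_cycle_length[OF assms] by auto
  then show ?thesis using is_cycle_edge[OF assms] by metis
qed

lemma is_cycle_edge_last:
  assumes "is_cycle V F xs" shows "{xs ! 0, xs ! (length xs - 1)} \<in> F"
proof -
  have "length xs - 1 + 1 = length xs" using is_cycle_length[OF assms] by linarith
  then have "length xs - 1 < length xs" "(length xs - 1 + 1) mod length xs = 0"
    by (linarith, simp)
  then show ?thesis using is_cycle_edge[OF assms] by (metis insert_commute)
qed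

lemma has_chord_0_2: "length xs \<ge> 4 \<Longrightarrow> {xs ! 0, xs ! 2} \<in> F \<Longrightarrow> has_chord F xs"
  by (rule has_chordI[of 0 xs 2]) auto

lemma has_chord_1_last: "length xs \<ge> 4 \<Longrightarrow> {xs ! (length xs - 1), xs ! 1} \<in> F \<Longrightarrow> has_chord F xs"
  by (rule has_chordI[of "length xs - 1" xs 1]) (auto simp: mod_Suc)

lemma is_cycle_rotate:
  assumes "is_cycle V F xs" shows "is_cycle V F (rotate k xs)"
proof -
  let ?n = "length xs"
  have n: "?n > 0" using is_cycle_length[OF assms] by linarith
  have "{rotate k xs ! i, rotate k xs ! ((i + 1) mod ?n)} \<in> F" if "i < ?n" for i
  proof -
    have "rotate k xs ! i = xs ! ((i + k) mod ?n)"
      using that by (simp add: nth_rotate add.commute)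
    moreover have "rotate k xs ! ((i + 1) mod ?n) = xs ! (((i + k) mod ?n + 1) mod ?n)"
      using n by (simp add: nth_rotate mod_add_right_eq mod_Suc_eq ac_simps)
    ultimately show ?thesis using is_cycle_edge[OF assms, of "(i + k) mod ?n"] n by simp
  qed
  then show ?thesis using assms by (simp add: is_cycle_def)
qed

lemma has_chord_unrotate:
  assumes "has_chord F (rotate k xs)" shows "has_chord F xs"
proof -
  let ?n = "length xs"
  obtain i j where ij: "i < ?n" "j < ?n" "i \<noteq> j" "j \<noteq> (i + 1) mod ?n"
    "i \<noteq> (j + 1) mod ?n" "{rotate k xs ! i, rotate k xs ! j} \<in> F"
    using assms by (auto simp: has_chord_def)
  have n: "?n > 0" using ij(1) by linarith
  have cancel: "(a + k) mod ?n = (b + k) mod ?n \<Longrightarrow> a mod ?n = b mod ?n" for a b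
    by (simp add: nat_mod_eq_iff)
  have shift: "((a + k) mod ?n + 1) mod ?n = (a + 1 + k) mod ?n" for a
    by (simp add: mod_Suc_eq)
  show ?thesis
  proof (rule has_chordI[of "(i + k) mod ?n" xs "(j + k) mod ?n"])
    show "(i + k) mod ?n \<noteq> (j + k) mod ?n"
      using ij cancel[of i j] by auto
    show "(j + k) mod ?n \<noteq> ((i + k) mod ?n + 1) mod ?n"
      unfolding shift using ij cancel[of j "i + 1"] by auto
    show "(i + k) mod ?n \<noteq> ((j + k) mod ?n + 1) mod ?n"
      unfolding shift using ij cancel[of i "j + 1"] by auto
    show "{xs ! ((i + k) mod ?n), xs ! ((j + k) mod ?n)} \<in> F"
      using ij by (simp add: nth_rotate add.commute)
  qed (use n in auto)
qed

lemma cyclic_exit: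
  assumes "p < length xs" "xs ! p \<in> M" "q < length xs" "xs ! q \<notin> M"
  shows "\<exists>i < length xs. xs ! i \<in> M \<and> xs ! ((i + 1) mod length xs) \<notin> M"
proof (rule ccontr)
  let ?n = "length xs"
  assume "\<not> ?thesis"
  then have step: "\<And>i. i < ?n \<Longrightarrow> xs ! i \<in> M \<Longrightarrow> xs ! ((i + 1) mod ?n) \<in> M"
    by blast
  have n: "?n > 0" using assms by auto
  have "xs ! ((p + k) mod ?n) \<in> M" for k
  proof (induction k)
    case 0
    then show ?case using assms by simp
  next
    case (Suc k)
    have "xs ! (((p + k) mod ?n + 1) mod ?n) \<in> M" using step[OF _ Suc] n by simp
    then show ?case by (simp add: mod_Suc_eq)
  qed
  from this[of "q + ?n - p"] show False using assms by simp
qed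

lemma chordless_cycle_exit_first:
  assumes cyc: "is_cycle V F xs" and nc: "\<not> has_chord F xs"
    and "x \<in> set xs" "x \<in> M" and "y \<in> set xs" "y \<notin> M"
  obtains ys where "is_cycle V F ys" "\<not> has_chord F ys" "ys ! 0 \<in> M" "ys ! 1 \<notin> M"
proof -
  obtain p q where "p < length xs" "xs ! p \<in> M" "q < length xs" "xs ! q \<notin> M"
    using assms(3-6) by (metis in_set_conv_nth)
  then obtain i where i: "i < length xs" "xs ! i \<in> M" "xs ! ((i + 1) mod length xs) \<notin> M"
    using cyclic_exit by blast
  have n: "length xs \<ge> 4" using is_cycle_length[OF cyc] .
  have "xs \<noteq> []" using i(1) by auto
  then have "rotate i xs ! 0 = xs ! i" "rotate i xs ! 1 = xs ! ((i + 1) mod length xs)"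
    using i(1) n nth_rotate[of 0 xs i] nth_rotate[of 1 xs i] by (auto simp: add.commute)
  then show ?thesis
    using that[of "rotate i xs"] i is_cycle_rotate[OF cyc] has_chord_unrotate nc by auto
qed

section \<open>Chordal graphs\<close>

lemma chordal_induced:
  assumes "chordal V F" "W \<subseteq> V" shows "chordal W {e \<in> F. e \<subseteq> W}"
  unfolding chordal_iff_cycles
proof (intro allI impI)
  fix xs assume c: "is_cycle W {e \<in> F. e \<subseteq> W} xs"
  then have "is_cycle V F xs" using assms(2) by (auto simp: is_cycle_def)
  then have "has_chord F xs" using assms(1) by (simp add: chordal_iff_cycles)
  then obtain i j where ij: "i < length xs" "j < length xs" "i \<noteq> j" "j \<noteq> (i + 1) mod length xs"
    "i \<noteq> (j + 1) mod length xs" "{xs ! i, xs ! j} \<in> F" unfolding has_chord_def by blast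
  moreover have "{xs ! i, xs ! j} \<subseteq> W" using c ij(1,2) by (auto simp: is_cycle_def)
  ultimately show "has_chord {e \<in> F. e \<subseteq> W} xs" by (intro has_chordI[of i xs j]) auto
qed

lemma has_chord_inside:
  assumes chA: "chordal W A" and AG: "A \<subseteq> G" and cyc: "is_cycle V G xs" and W: "set xs \<subseteq> W"
    and GA: "\<And>x y. x \<in> W \<Longrightarrow> y \<in> W \<Longrightarrow> {x, y} \<in> G \<Longrightarrow> {x, y} \<in> A"
  shows "has_chord G xs"
proof -
  have "{xs ! i, xs ! ((i + 1) mod length xs)} \<in> A" if "i < length xs" for i
  proof (rule GA)
    have "(i + 1) mod length xs < length xs" using that by (intro mod_less_divisor) linarith
    then show "xs ! i \<in> W" "xs ! ((i + 1) mod length xs) \<in> W"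
      using W that by (auto intro: nth_mem)
    show "{xs ! i, xs ! ((i + 1) mod length xs)} \<in> G" using is_cycle_edge[OF cyc that] .
  qed
  then have "is_cycle W A xs" using cyc W by (simp add: is_cycle_def)
  then show ?thesis using chA AG by (auto simp: chordal_iff_cycles intro: has_chord_mono)
qed

definition induced_path :: "'a set set \<Rightarrow> 'a list \<Rightarrow> bool" where
  "induced_path F ps \<longleftrightarrow> distinct ps \<and>
     (\<forall>a < length ps. \<forall>b < length ps. {ps ! a, ps ! b} \<in> F \<longleftrightarrow> a = Suc b \<or> b = Suc a)"

lemma apex_cycle:
  assumes P: "induced_path F qs" and l: "length qs \<ge> 3" and v: "v \<notin> set qs" "set (v # qs) \<subseteq> V"
    and apex: "\<forall>a < length qs. {v, qs ! a} \<in> F \<longleftrightarrow> a = 0 \<or> a = length qs - 1"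
  shows "is_cycle V F (v # qs)"
proof -
  let ?xs = "v # qs" let ?n = "length ?xs"
  have nth0: "?xs ! i = (if i = 0 then v else qs ! (i - 1))" for i by (simp add: nth_Cons')
  have "{?xs ! i, ?xs ! ((i + 1) mod ?n)} \<in> F" if i: "i < ?n" for i
  proof (cases "i = 0 \<or> i = ?n - 1")
    case True
    then show ?thesis using apex l by (auto simp: nth0 insert_commute)
  next
    case False
    then have "(i + 1) mod ?n = i + 1" using i by simp
    then show ?thesis using P False i unfolding induced_path_def by (cases i) (auto simp: nth0)
  qed
  then show ?thesis using P l v unfolding induced_path_def is_cycle_def by simp
qed

lemma apex_cycle_chordless:
  assumes P: "induced_path F qs" and l: "length qs \<ge> 3"
    and apex: "\<forall>a < length qs. {v, qs ! a} \<in> F \<longleftrightarrow> a = 0 \<or> a = length qs - 1"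
  shows "\<not> has_chord F (v # qs)"
proof
  let ?xs = "v # qs" let ?n = "length ?xs"
  have nth0: "?xs ! i = (if i = 0 then v else qs ! (i - 1))" for i by (simp add: nth_Cons')
  assume "has_chord F ?xs"
  then obtain i j where ij: "i < ?n" "j < ?n" "i \<noteq> j" "j \<noteq> (i + 1) mod ?n"
    "i \<noteq> (j + 1) mod ?n" "{?xs ! i, ?xs ! j} \<in> F" unfolding has_chord_def by blast
  consider "i = 0" | "j = 0" | "i \<noteq> 0" "j \<noteq> 0" by blast
  then show False
  proof cases
    case 1
    then have "j \<noteq> 1" "j \<noteq> ?n - 1" using ij l by (auto simp: mod_Suc)
    then show False using apex ij 1 by (simp add: nth0)
  next
    case 2
    then have "i \<noteq> 1" "i \<noteq> ?n - 1" using ij l by (auto simp: mod_Suc)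
    then show False using apex ij 2 by (simp add: nth0 insert_commute)
  next
    case 3
    then have "i - 1 \<noteq> Suc (j - 1)" "j - 1 \<noteq> Suc (i - 1)" using ij l
      by (auto simp: mod_Suc split: if_splits)
    then show False using P ij 3 unfolding induced_path_def by (simp add: nth0)
  qed
qed

lemma nearest_around:
  fixes A :: "nat set"
  assumes "0 \<in> A" "m \<in> A" "j \<le> m" "j \<notin> A"
  obtains a b where "a \<in> A" "b \<in> A" "a < j" "j < b" "b \<le> m" "\<forall>l. a < l \<and> l < b \<longrightarrow> l \<notin> A"
proof -
  let ?L = "{l \<in> A. l \<le> j}" and ?R = "{l \<in> A. j \<le> l \<and> l \<le> m}"
  have L: "finite ?L" "?L \<noteq> {}" and R: "finite ?R" "?R \<noteq> {}" using assms by auto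
  define a where "a = Max ?L"
  define b where "b = Min ?R"
  have a: "a \<in> A" "a < j" using Max_in[OF L] assms(4) unfolding a_def by (auto simp: le_less)
  have b: "b \<in> A" "j < b" "b \<le> m" using Min_in[OF R] assms(4) unfolding b_def by (auto simp: le_less)
  have "l \<notin> A" if "a < l" "l < b" for l
  proof
    assume lA: "l \<in> A"
    show False
    proof (cases "l \<le> j")
      case True
      then have "l \<le> a" unfolding a_def using L(1) lA by (intro Max_ge) auto
      then show False using that by simp
    next
      case False
      then have "b \<le> l" unfolding b_def using R(1) lA that b(3) by (intro Min_le) auto
      then show False using that by simp
    qed
  qed
  then show ?thesis using that a b by blast
qed

text \<open>In a chordal graph, a vertex adjacent to both ends of an induced path is adjacent to
  every vertex of it (otherwise a shortest non-adjacent stretch gives a chordless cycle).\<close>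

lemma chordal_apex_path:
  assumes ch: "chordal V F" and P: "induced_path F ps" and sV: "set ps \<subseteq> V" and l2: "length ps \<ge> 2"
    and v: "v \<in> V" "v \<notin> set ps" "{v, ps ! 0} \<in> F" "{v, ps ! (length ps - 1)} \<in> F"
    and j: "j < length ps"
  shows "{v, ps ! j} \<in> F"
proof (rule ccontr)
  assume nj: "{v, ps ! j} \<notin> F"
  define A where "A = {l. l < length ps \<and> {v, ps ! l} \<in> F}"
  obtain a b where ab: "a \<in> A" "b \<in> A" "a < j" "j < b" "b \<le> length ps - 1"
    and gap: "\<forall>l. a < l \<and> l < b \<longrightarrow> l \<notin> A"
    by (rule nearest_around[of A "length ps - 1" j]) (use v l2 j nj in \<open>auto simp: A_def\<close>)
  define qs where "qs = take (b - a + 1) (drop a ps)"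
  have lq: "length qs = b - a + 1" using ab l2 by (simp add: qs_def)
  have qn: "qs ! c = ps ! (a + c)" if "c < length qs" for c using that ab by (simp add: qs_def lq)
  have Pq: "induced_path F qs"
    using P lq qn ab unfolding induced_path_def qs_def by (auto intro: distinct_take distinct_drop)
  have apex: "\<forall>c < length qs. {v, qs ! c} \<in> F \<longleftrightarrow> c = 0 \<or> c = length qs - 1"
  proof (intro allI impI)
    fix c assume c: "c < length qs"
    show "{v, qs ! c} \<in> F \<longleftrightarrow> c = 0 \<or> c = length qs - 1"
    proof (cases "c = 0 \<or> c = length qs - 1")
      case True
      then show ?thesis using ab lq qn c by (auto simp: A_def)
    next
      case False
      then have "a + c \<notin> A" using gap lq c by auto
      then show ?thesis using False qn c lq ab by (auto simp: A_def)
    qed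
  qed
  have "set (v # qs) \<subseteq> V" "v \<notin> set qs"
    using sV v(1,2) by (auto simp: qs_def dest: in_set_takeD in_set_dropD)
  moreover have "length qs \<ge> 3" using lq ab by simp
  ultimately have "is_cycle V F (v # qs)" "\<not> has_chord F (v # qs)"
    using apex_cycle[OF Pq] apex_cycle_chordless[OF Pq] apex by auto
  then show False using ch by (simp add: chordal_iff_cycles)
qed

lemma chordless_cycle_tail:
  assumes cyc: "is_cycle V G ys" and nc: "\<not> has_chord G ys" and G2: "\<forall>e\<in>G. card e = 2"
  shows "induced_path G (tl ys)"
proof -
  let ?n = "length ys" let ?ps = "tl ys"
  have n: "?n \<ge> 4" using is_cycle_length[OF cyc] .
  have psn: "?ps ! a = ys ! Suc a" if "a < length ?ps" for a using that by (simp add: nth_tl)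
  have "{?ps ! a, ?ps ! b} \<in> G \<longleftrightarrow> a = Suc b \<or> b = Suc a"
    if ab: "a < length ?ps" "b < length ?ps" for a b
  proof
    have step: "{ys ! Suc c, ys ! Suc (Suc c)} \<in> G" if "Suc c < length ?ps" for c
      using is_cycle_edge[OF cyc, of "Suc c"] that by simp
    assume "a = Suc b \<or> b = Suc a"
    then show "{?ps ! a, ?ps ! b} \<in> G" using step ab psn by (auto simp: insert_commute)
  next
    assume e: "{?ps ! a, ?ps ! b} \<in> G"
    show "a = Suc b \<or> b = Suc a"
    proof (rule ccontr)
      assume far: "\<not> (a = Suc b \<or> b = Suc a)"
      have "a \<noteq> b" using e G2 by fastforce
      moreover have "Suc b \<noteq> (Suc a + 1) mod ?n" "Suc a \<noteq> (Suc b + 1) mod ?n"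
        using far ab by (auto simp: mod_Suc)
      ultimately have "has_chord G ys"
        using e ab psn by (intro has_chordI[of "Suc a" ys "Suc b"]) auto
      then show False using nc by contradiction
    qed
  qed
  then show ?thesis using cyc by (simp add: induced_path_def is_cycle_def distinct_tl)
qed

lemma induced_path_cong:
  "(\<And>x y. x \<in> set ps \<Longrightarrow> y \<in> set ps \<Longrightarrow> {x, y} \<in> F \<longleftrightarrow> {x, y} \<in> G) \<Longrightarrow>
   induced_path F ps \<longleftrightarrow> induced_path G ps"
  unfolding induced_path_def by auto

section \<open>Gluing two chordal graphs\<close>

definition glue :: "'a set set \<Rightarrow> 'a set set \<Rightarrow> 'a set \<Rightarrow> 'a set \<Rightarrow> 'a set set" where
  "glue A B M S = A \<union> B \<union> {{m, s} | m s. m \<in> M \<and> s \<in> S}"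

lemma glue_join: "m \<in> M \<Longrightarrow> s \<in> S \<Longrightarrow> {m, s} \<in> glue A B M S"
  unfolding glue_def by blast

context
  fixes X M S :: "'a set" and A B :: "'a set set"
  assumes disj: "X \<inter> M = {}" and A: "\<forall>e\<in>A. e \<subseteq> X" and B: "\<forall>e\<in>B. e \<subseteq> M"
    and S: "S \<subseteq> X"
begin

lemma glue_edge_outside: "{x, y} \<in> glue A B M S \<Longrightarrow> x \<in> X \<Longrightarrow> y \<in> X \<Longrightarrow> {x, y} \<in> A"
  using disj B unfolding glue_def by (auto simp: doubleton_eq_iff) (metis disjoint_iff insert_subset)

lemma glue_edge_inside: "{x, y} \<in> glue A B M S \<Longrightarrow> x \<in> M \<Longrightarrow> y \<in> M \<Longrightarrow> {x, y} \<in> B"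
  using disj A S unfolding glue_def by (auto simp: doubleton_eq_iff) (metis disjoint_iff insert_subset)

lemma glue_edge_leaving: "{x, y} \<in> glue A B M S \<Longrightarrow> x \<in> M \<Longrightarrow> y \<notin> M \<Longrightarrow> y \<in> S"
  using disj A B unfolding glue_def by (auto simp: doubleton_eq_iff) (metis disjoint_iff insert_subset)

lemma glue_chordless_cycle_ends:
  assumes cyc: "is_cycle V (glue A B M S) ys" and nc: "\<not> has_chord (glue A B M S) ys"
    and y0: "ys ! 0 \<in> M" and y1: "ys ! 1 \<notin> M"
  shows "ys ! 1 \<in> S" "ys ! (length ys - 1) \<in> S"
proof -
  have n: "length ys \<ge> 4" using is_cycle_length[OF cyc] .
  show S1: "ys ! 1 \<in> S" using glue_edge_leaving[OF is_cycle_edge_first[OF cyc] y0 y1] .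
  have "ys ! (length ys - 1) \<notin> M"
  proof
    assume "ys ! (length ys - 1) \<in> M"
    then have "{ys ! (length ys - 1), ys ! 1} \<in> glue A B M S" using S1 by (rule glue_join)
    then show False using has_chord_1_last[OF n] nc by blast
  qed
  then show "ys ! (length ys - 1) \<in> S"
    using glue_edge_leaving[OF is_cycle_edge_last[OF cyc] y0] by blast
qed

text \<open>To show that a glued graph is chordal it suffices to exclude chordless cycles that start
  with a vertex of M followed by a vertex outside M; all other cycles lie inside X or M.\<close>

lemma glue_chordal_crossing:
  assumes chA: "chordal X A" and chB: "chordal M B"
    and cross: "\<And>ys. is_cycle (X \<union> M) (glue A B M S) ys \<Longrightarrow> \<not> has_chord (glue A B M S) ys \<Longrightarrow>
                 ys ! 0 \<in> M \<Longrightarrow> ys ! 1 \<notin> M \<Longrightarrow> False"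
  shows "chordal (X \<union> M) (glue A B M S)"
  unfolding chordal_iff_cycles
proof (intro allI impI)
  let ?G = "glue A B M S"
  have AG: "A \<subseteq> ?G" and BG: "B \<subseteq> ?G" unfolding glue_def by blast+
  fix xs assume cyc: "is_cycle (X \<union> M) ?G xs"
  show "has_chord ?G xs"
  proof (rule ccontr)
    assume nc: "\<not> has_chord ?G xs"
    have "set xs \<subseteq> X \<union> M" using cyc by (simp add: is_cycle_def)
    then consider "set xs \<subseteq> X" | "set xs \<subseteq> M" | x y where
      "x \<in> set xs" "x \<in> M" "y \<in> set xs" "y \<notin> M" by blast
    then show False
    proof cases
      case 1
      then show False using has_chord_inside[OF chA AG cyc] glue_edge_outside nc by blast
    next
      case 2
      then show False using has_chord_inside[OF chB BG cyc] glue_edge_inside nc by blast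
    next
      case 3
      then show False using chordless_cycle_exit_first[OF cyc nc] cross by metis
    qed
  qed
qed

text \<open>If S is a clique of A, gluing chordal graphs along S gives a chordal graph: a crossing
  cycle would have its two S-vertices adjacent, which is a chord.\<close>

lemma glue_chordal_clique_separator:
  assumes chA: "chordal X A" and chB: "chordal M B"
    and Scl: "\<forall>x\<in>S. \<forall>y\<in>S. x \<noteq> y \<longrightarrow> {x, y} \<in> A"
  shows "chordal (X \<union> M) (glue A B M S)"
proof (rule glue_chordal_crossing[OF chA chB])
  fix ys assume cyc: "is_cycle (X \<union> M) (glue A B M S) ys"
    and nc: "\<not> has_chord (glue A B M S) ys" and y: "ys ! 0 \<in> M" "ys ! 1 \<notin> M"
  have n: "length ys \<ge> 4" and d: "distinct ys" using cyc by (auto simp: is_cycle_def)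
  then have "ys ! (length ys - 1) \<noteq> ys ! 1" by (simp add: nth_eq_iff_index_eq)
  then have "{ys ! (length ys - 1), ys ! 1} \<in> glue A B M S"
    using Scl glue_chordless_cycle_ends[OF cyc nc y] unfolding glue_def by blast
  then show False using has_chord_1_last[OF n] nc by blast
qed

text \<open>If M is a clique of B, a chordless cycle that starts in M and then leaves M never
  returns to M: a later M-vertex is adjacent to the second vertex (which lies in S), a chord
  unless it is the third vertex, which in turn would be adjacent to the first.\<close>

lemma glue_chordless_cycle_leaves_clique:
  assumes cyc: "is_cycle V (glue A B M S) ys" and nc: "\<not> has_chord (glue A B M S) ys"
    and y0: "ys ! 0 \<in> M" and y1: "ys ! 1 \<notin> M"
    and Mcl: "\<forall>x\<in>M. \<forall>y\<in>M. x \<noteq> y \<longrightarrow> {x, y} \<in> B"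
    and k: "1 \<le> k" "k < length ys"
  shows "ys ! k \<notin> M"
proof
  let ?G = "glue A B M S"
  assume kM: "ys ! k \<in> M"
  have n: "length ys \<ge> 4" and d: "distinct ys" using cyc by (auto simp: is_cycle_def)
  have y1S: "ys ! 1 \<in> S" using glue_chordless_cycle_ends[OF cyc nc y0 y1] by blast
  have "k \<noteq> 1" using kM y1 by auto
  have "k = 2"
  proof (rule ccontr)
    assume "k \<noteq> 2"
    moreover have "{ys ! k, ys ! 1} \<in> ?G" using kM y1S by (rule glue_join)
    ultimately have "has_chord ?G ys"
      using k \<open>k \<noteq> 1\<close> n by (intro has_chordI[of k ys 1]) (auto simp: mod_Suc)
    then show False using nc by contradiction
  qed
  have "ys \<noteq> []" using n by (cases ys) auto
  then have "ys ! 0 \<noteq> ys ! 2" using nth_eq_iff_index_eq[OF d, of 0 2] n by simp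
  then have "{ys ! 0, ys ! 2} \<in> ?G" using Mcl y0 kM \<open>k = 2\<close> unfolding glue_def by blast
  then show False using has_chord_0_2[OF n] nc by blast
qed

lemma glue_clique_join:
  assumes K: "clique M B K" and MV: "M \<subseteq> V" and SV: "S \<subseteq> V"
    and Scl: "\<forall>x\<in>S. \<forall>y\<in>S. x \<noteq> y \<longrightarrow> {x, y} \<in> A"
  shows "clique V (glue A B M S) (K \<union> S)"
  using assms unfolding clique_def glue_def by (auto simp: insert_commute)

lemma glue_clique_outside:
  assumes "clique V (glue A B M S) K" "m \<in> K" "m \<in> M" "x \<in> K - M"
  shows "x \<in> S"
proof -
  have "{m, x} \<in> glue A B M S" using assms unfolding clique_def by auto
  then show ?thesis using glue_edge_leaving assms(3,4) by blast
qed

lemma glue_maximal_clique: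
  assumes mc: "maximal_clique V (glue A B M S) \<Omega>" and meet: "\<Omega> \<inter> M \<noteq> {}"
    and MV: "M \<subseteq> V" and SV: "S \<subseteq> V" and Scl: "\<forall>x\<in>S. \<forall>y\<in>S. x \<noteq> y \<longrightarrow> {x, y} \<in> A"
  shows "\<Omega> - M = S" "maximal_clique M B (\<Omega> \<inter> M)"
proof -
  have cl: "clique V (glue A B M S) \<Omega>"
    and max: "\<And>K. clique V (glue A B M S) K \<Longrightarrow> \<Omega> \<subseteq> K \<Longrightarrow> K = \<Omega>"
    using mc unfolding maximal_clique_def by blast+
  have out: "\<Omega> - M \<subseteq> S" using glue_clique_outside[OF cl] meet by blast
  have extend: "K \<union> S = \<Omega>" if "clique M B K" "\<Omega> \<inter> M \<subseteq> K" for K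
    using max[OF glue_clique_join[OF that(1) MV SV Scl]] that(2) out by blast
  have clM: "clique M B (\<Omega> \<inter> M)"
    using cl glue_edge_inside unfolding clique_def by blast
  show "\<Omega> - M = S" using extend[OF clM] disj S by blast
  show "maximal_clique M B (\<Omega> \<inter> M)"
    unfolding maximal_clique_def
  proof (intro conjI allI impI clM)
    fix K assume "clique M B K \<and> \<Omega> \<inter> M \<subseteq> K"
    then show "K = \<Omega> \<inter> M" using extend[of K] disj S unfolding clique_def by blast
  qed
qed

lemma glue_maximal_clique_complete:
  assumes mc: "maximal_clique V (glue A B M S) \<Omega>" and meet: "\<Omega> \<inter> M \<noteq> {}"
    and MV: "M \<subseteq> V" and Mcl: "\<forall>x\<in>M. \<forall>y\<in>M. x \<noteq> y \<longrightarrow> {x, y} \<in> B"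
  shows "M \<subseteq> \<Omega>"
proof -
  have cl: "clique V (glue A B M S) \<Omega>"
    and max: "\<And>K. clique V (glue A B M S) K \<Longrightarrow> \<Omega> \<subseteq> K \<Longrightarrow> K = \<Omega>"
    using mc unfolding maximal_clique_def by blast+
  have out: "\<Omega> - M \<subseteq> S" using glue_clique_outside[OF cl] meet by blast
  have "clique V (glue A B M S) (\<Omega> \<union> M)"
    using cl out MV Mcl unfolding clique_def glue_def by (auto simp: insert_commute)
  then show ?thesis using max by blast
qed

end

text \<open>Let M be a clique of a chordal graph F and T the set of common F-neighbours of M outside M.
  In a chordless cycle of the graph that keeps from the edges between M and the rest of V only
  the M-T edges, and that starts in M and then leaves M, all vertices after the first lie
  outside M; there the graph agrees with F, so they form an induced path of F.\<close>

lemma glue_complete_crossing_tail: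
  assumes F2: "\<forall>e\<in>F. card e = 2"
    and Mcl: "\<forall>x\<in>M. \<forall>y\<in>M. x \<noteq> y \<longrightarrow> {x, y} \<in> F"
    and T: "T = {x \<in> V - M. \<forall>m\<in>M. {m, x} \<in> F}"
    and cyc: "is_cycle V (glue {e \<in> F. e \<subseteq> V - M} {e \<in> F. e \<subseteq> M} M T) ys"
    and nc: "\<not> has_chord (glue {e \<in> F. e \<subseteq> V - M} {e \<in> F. e \<subseteq> M} M T) ys"
    and y0: "ys ! 0 \<in> M" and y1: "ys ! 1 \<notin> M"
  shows "set (tl ys) \<subseteq> V - M" "induced_path F (tl ys)"
proof -
  let ?A = "{e \<in> F. e \<subseteq> V - M}" and ?B = "{e \<in> F. e \<subseteq> M}"
  let ?G = "glue ?A ?B M T" and ?ps = "tl ys"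
  have parts: "(V - M) \<inter> M = {}" "\<forall>e\<in>?A. e \<subseteq> V - M" "\<forall>e\<in>?B. e \<subseteq> M" "T \<subseteq> V - M"
    using T by auto
  have GF: "?G \<subseteq> F" using T unfolding glue_def by auto
  have "ys ! k \<notin> M" if "1 \<le> k" "k < length ys" for k
    using glue_chordless_cycle_leaves_clique[OF parts cyc nc y0 y1] Mcl that by auto
  then have "x \<notin> M" if "x \<in> set ?ps" for x
    using that by (auto simp: in_set_conv_nth nth_tl)
  moreover have "set ?ps \<subseteq> V" using cyc by (cases ys) (auto simp: is_cycle_def)
  ultimately show psX: "set ?ps \<subseteq> V - M" by blast
  have "induced_path ?G ?ps" using chordless_cycle_tail[OF cyc nc] GF F2 by blast
  moreover have "{x, y} \<in> F \<longleftrightarrow> {x, y} \<in> ?G" if "x \<in> set ?ps" "y \<in> set ?ps" for x y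
    using that psX GF unfolding glue_def by auto
  ultimately show "induced_path F ?ps" using induced_path_cong by blast
qed

text \<open>Such a cycle does not exist: the ends of that induced path lie in T, so by chordality
  every vertex of M is adjacent to the whole path; hence the third vertex of the cycle lies
  in T and is joined to the first by a chord.\<close>

lemma glue_complete_module_crossing:
  assumes ch: "chordal V F" and F2: "\<forall>e\<in>F. card e = 2" and MV: "M \<subseteq> V"
    and Mcl: "\<forall>x\<in>M. \<forall>y\<in>M. x \<noteq> y \<longrightarrow> {x, y} \<in> F"
    and T: "T = {x \<in> V - M. \<forall>m\<in>M. {m, x} \<in> F}"
    and cyc: "is_cycle V (glue {e \<in> F. e \<subseteq> V - M} {e \<in> F. e \<subseteq> M} M T) ys"
    and y0: "ys ! 0 \<in> M" and y1: "ys ! 1 \<notin> M"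
  shows "has_chord (glue {e \<in> F. e \<subseteq> V - M} {e \<in> F. e \<subseteq> M} M T) ys"
proof (rule ccontr)
  let ?G = "glue {e \<in> F. e \<subseteq> V - M} {e \<in> F. e \<subseteq> M} M T" and ?n = "length ys"
  let ?ps = "tl ys"
  assume nc: "\<not> has_chord ?G ys"
  have parts: "(V - M) \<inter> M = {}" "\<forall>e\<in>{e \<in> F. e \<subseteq> V - M}. e \<subseteq> V - M"
    "\<forall>e\<in>{e \<in> F. e \<subseteq> M}. e \<subseteq> M" "T \<subseteq> V - M"
    using T by auto
  have n: "?n \<ge> 4" using is_cycle_length[OF cyc] .
  have psn: "?ps ! a = ys ! Suc a" if "a < length ?ps" for a using that by (simp add: nth_tl)
  have psX: "set ?ps \<subseteq> V - M" and path: "induced_path F ?ps"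
    using glue_complete_crossing_tail[OF F2 Mcl T cyc nc y0 y1] by blast+
  have "Suc (length ?ps - 1) = ?n - 1" using n by simp
  then have ends: "?ps ! 0 \<in> T" "?ps ! (length ?ps - 1) \<in> T"
    using glue_chordless_cycle_ends[OF parts cyc nc y0 y1] n psn by auto
  have "{m, ?ps ! 1} \<in> F" if m: "m \<in> M" for m
  proof (rule chordal_apex_path[OF ch path])
    show "{m, ?ps ! 0} \<in> F" "{m, ?ps ! (length ?ps - 1)} \<in> F" using ends T m by auto
  qed (use psX n m MV in auto)
  moreover have "1 < length ?ps" using n by simp
  then have "?ps ! 1 \<in> V - M" "?ps ! 1 = ys ! 2"
    using psX nth_mem psn[of 1] by (blast, simp add: numeral_2_eq_2)
  ultimately have "ys ! 2 \<in> T" using T by auto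
  then have "{ys ! 0, ys ! 2} \<in> ?G" using y0 by (simp add: glue_join)
  then show False using has_chord_0_2[OF n] nc by blast
qed

lemma glue_chordal_complete_module:
  assumes ch: "chordal V F" and F2: "\<forall>e\<in>F. card e = 2" and MV: "M \<subseteq> V"
    and Mcl: "\<forall>x\<in>M. \<forall>y\<in>M. x \<noteq> y \<longrightarrow> {x, y} \<in> F"
    and T: "T = {x \<in> V - M. \<forall>m\<in>M. {m, x} \<in> F}"
  shows "chordal V (glue {e \<in> F. e \<subseteq> V - M} {e \<in> F. e \<subseteq> M} M T)"
proof -
  have V: "(V - M) \<union> M = V" using MV by blast
  have "chordal ((V - M) \<union> M) (glue {e \<in> F. e \<subseteq> V - M} {e \<in> F. e \<subseteq> M} M T)"
  proof (rule glue_chordal_crossing)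
    show "(V - M) \<inter> M = {}" "\<forall>e\<in>{e \<in> F. e \<subseteq> V - M}. e \<subseteq> V - M"
      "\<forall>e\<in>{e \<in> F. e \<subseteq> M}. e \<subseteq> M" "T \<subseteq> V - M" using T by auto
    show "chordal (V - M) {e \<in> F. e \<subseteq> V - M}" "chordal M {e \<in> F. e \<subseteq> M}"
      using chordal_induced[OF ch] MV by auto
  qed (use glue_complete_module_crossing[OF ch F2 MV Mcl T] V in auto)
  then show ?thesis using V by simp
qed

section \<open>Modules and minimal triangulations\<close>

definition module :: "'a set \<Rightarrow> 'a set set \<Rightarrow> 'a set \<Rightarrow> bool" where
  "module V E M \<longleftrightarrow> M \<subseteq> V \<and> (\<forall>m\<in>M. \<forall>x\<in>nbhd V E M. {m, x} \<in> E)"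

lemma minimal_triangulation_squeeze:
  assumes "minimal_triangulation V E F" "E \<subseteq> G" "G \<subseteq> F" "chordal V G"
  shows "G = F"
  using assms unfolding minimal_triangulation_def by blast

lemma minimal_triangulation_edges:
  assumes "minimal_triangulation V E F" "e \<in> F"
  shows "e \<subseteq> V" "card e = 2"
  using assms unfolding minimal_triangulation_def graph_def by blast+

lemma edges_in_glue:
  assumes mt: "minimal_triangulation V E F"
    and EB: "{e \<in> E. e \<subseteq> M} \<subseteq> B" and NS: "nbhd V E M \<subseteq> S"
  shows "E \<subseteq> glue {e \<in> F. e \<subseteq> V - M} B M S"
proof
  fix e assume e: "e \<in> E"
  have EF: "E \<subseteq> F" using mt unfolding minimal_triangulation_def by blast
  have "e \<subseteq> V" "card e = 2" using minimal_triangulation_edges[OF mt] e EF by blast+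
  then obtain x y where xy: "e = {x, y}" "x \<in> V" "y \<in> V" by (metis card_2_iff insert_subset)
  have leave: "b \<in> S" if "{a, b} \<in> E" "a \<in> M" "b \<in> V" "b \<notin> M" for a b
    using that NS unfolding nbhd_def by blast
  consider "x \<in> M" "y \<in> M" | "x \<in> M" "y \<notin> M" | "x \<notin> M" "y \<in> M" | "x \<notin> M" "y \<notin> M"
    by blast
  then show "e \<in> glue {e \<in> F. e \<subseteq> V - M} B M S"
  proof cases
    case 1
    then show ?thesis using e xy EB unfolding glue_def by blast
  next
    case 2
    then show ?thesis using leave[of x y] e xy glue_join[of x M y S] by simp
  next
    case 3
    then show ?thesis using leave[of y x] e xy glue_join[of y M x S] by (simp add: insert_commute)
  next
    case 4
    then show ?thesis using e xy EF unfolding glue_def by blast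
  qed
qed

text \<open>If a module M contains two vertices that a triangulation F leaves non-adjacent, then the
  neighbourhood of M is a clique of F: two non-adjacent neighbours would span a chordless
  4-cycle with them.\<close>

lemma module_nbhd_clique:
  assumes ch: "chordal V F" and EF: "E \<subseteq> F" and mod: "module V E M"
    and ab: "a \<in> M" "b \<in> M" "a \<noteq> b" "{a, b} \<notin> F"
  shows "\<forall>x\<in>nbhd V E M. \<forall>y\<in>nbhd V E M. x \<noteq> y \<longrightarrow> {x, y} \<in> F"
proof (intro ballI impI)
  fix x y assume xy: "x \<in> nbhd V E M" "y \<in> nbhd V E M" "x \<noteq> y"
  have adj: "{m, z} \<in> F" if "m \<in> M" "z \<in> nbhd V E M" for m z
    using that mod EF unfolding module_def by blast
  have "x \<notin> M" "y \<notin> M" "x \<in> V" "y \<in> V" using xy unfolding nbhd_def by auto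
  then have "is_cycle V F [a, x, b, y]"
    using ab xy mod adj[of a x] adj[of b x] adj[of b y] adj[of a y]
    unfolding is_cycle_def module_def by (auto simp: less_Suc_eq insert_commute)
  then have "has_chord F [a, x, b, y]" using ch by (simp add: chordal_iff_cycles)
  then show "{x, y} \<in> F" using ab(4) unfolding has_chord_def by (auto simp: less_Suc_eq insert_commute)
qed

lemma module_separator_triangulation:
  assumes mt: "minimal_triangulation V E F" and mod: "module V E M"
    and Ncl: "\<forall>x\<in>nbhd V E M. \<forall>y\<in>nbhd V E M. x \<noteq> y \<longrightarrow> {x, y} \<in> F"
    and chB: "chordal M B" and EB: "{e \<in> E. e \<subseteq> M} \<subseteq> B" and BF: "B \<subseteq> {e \<in> F. e \<subseteq> M}"
  shows "glue {e \<in> F. e \<subseteq> V - M} B M (nbhd V E M) = F"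
proof (rule minimal_triangulation_squeeze[OF mt])
  let ?A = "{e \<in> F. e \<subseteq> V - M}" and ?N = "nbhd V E M"
  have ch: "chordal V F" and EF: "E \<subseteq> F" using mt unfolding minimal_triangulation_def by blast+
  have MV: "M \<subseteq> V" using mod unfolding module_def by blast
  have parts: "(V - M) \<inter> M = {}" "\<forall>e\<in>?A. e \<subseteq> V - M" "\<forall>e\<in>B. e \<subseteq> M" "?N \<subseteq> V - M"
    using BF unfolding nbhd_def by auto
  have "chordal ((V - M) \<union> M) (glue ?A B M ?N)"
  proof (rule glue_chordal_clique_separator[OF parts chordal_induced[OF ch] chB])
    show "\<forall>x\<in>?N. \<forall>y\<in>?N. x \<noteq> y \<longrightarrow> {x, y} \<in> ?A" using Ncl parts(4) by blast
  qed blast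
  then show "chordal V (glue ?A B M ?N)" using MV by (simp add: Un_absorb2)
  show "E \<subseteq> glue ?A B M ?N" using edges_in_glue[OF mt EB] by blast
  show "glue ?A B M ?N \<subseteq> F" using mod EF BF unfolding module_def glue_def by auto
qed

text \<open>In the separator case the part of F inside M is a minimal triangulation of the subgraph
  induced by M: a smaller chordal graph could replace it, contradicting minimality of F.\<close>

lemma module_separator_restriction:
  assumes mt: "minimal_triangulation V E F" and mod: "module V E M"
    and Ncl: "\<forall>x\<in>nbhd V E M. \<forall>y\<in>nbhd V E M. x \<noteq> y \<longrightarrow> {x, y} \<in> F"
  shows "minimal_triangulation M {e \<in> E. e \<subseteq> M} {e \<in> F. e \<subseteq> M}"
  unfolding minimal_triangulation_def
proof (intro conjI allI impI)
  let ?B = "{e \<in> F. e \<subseteq> M}"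
  have ch: "chordal V F" and EF: "E \<subseteq> F" and gF: "graph V F"
    using mt unfolding minimal_triangulation_def by blast+
  have MV: "M \<subseteq> V" using mod unfolding module_def by blast
  show "graph M ?B" using gF MV finite_subset unfolding graph_def by blast
  show "{e \<in> E. e \<subseteq> M} \<subseteq> ?B" using EF by blast
  show "chordal M ?B" using chordal_induced[OF ch MV] .
  fix B assume B: "{e \<in> E. e \<subseteq> M} \<subseteq> B \<and> B \<subset> ?B"
  show "\<not> chordal M B"
  proof
    assume "chordal M B"
    then have glued: "glue {e \<in> F. e \<subseteq> V - M} B M (nbhd V E M) = F"
      using module_separator_triangulation[OF mt mod Ncl] B by blast
    have parts: "(V - M) \<inter> M = {}" "\<forall>e\<in>{e \<in> F. e \<subseteq> V - M}. e \<subseteq> V - M"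
      "\<forall>e\<in>B. e \<subseteq> M" "nbhd V E M \<subseteq> V - M"
      using B unfolding nbhd_def by auto
    have "e \<in> B" if e: "e \<in> ?B" for e
    proof -
      have "card e = 2" using e minimal_triangulation_edges[OF mt] by blast
      then obtain x y where xy: "e = {x, y}" by (meson card_2_iff)
      then have "x \<in> M" "y \<in> M" "{x, y} \<in> glue {e \<in> F. e \<subseteq> V - M} B M (nbhd V E M)"
        using e glued by auto
      then show ?thesis using glue_edge_inside[OF parts] xy by blast
    qed
    then show False using B by blast
  qed
qed

lemma module_complete_triangulation:
  assumes mt: "minimal_triangulation V E F" and mod: "module V E M"
    and Mcl: "\<forall>x\<in>M. \<forall>y\<in>M. x \<noteq> y \<longrightarrow> {x, y} \<in> F"
    and T: "T = {x \<in> V - M. \<forall>m\<in>M. {m, x} \<in> F}"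
  shows "glue {e \<in> F. e \<subseteq> V - M} {e \<in> F. e \<subseteq> M} M T = F"
proof (rule minimal_triangulation_squeeze[OF mt])
  have ch: "chordal V F" and EF: "E \<subseteq> F" using mt unfolding minimal_triangulation_def by blast+
  have MV: "M \<subseteq> V" using mod unfolding module_def by blast
  have F2: "\<forall>e\<in>F. card e = 2" using minimal_triangulation_edges[OF mt] by blast
  show "chordal V (glue {e \<in> F. e \<subseteq> V - M} {e \<in> F. e \<subseteq> M} M T)"
    using glue_chordal_complete_module[OF ch F2 MV Mcl T] .
  have NT: "nbhd V E M \<subseteq> T"
  proof
    fix x assume x: "x \<in> nbhd V E M"
    then have "x \<in> V - M" unfolding nbhd_def by blast
    moreover have "\<forall>m\<in>M. {m, x} \<in> F" using mod x EF unfolding module_def by blast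
    ultimately show "x \<in> T" using T by blast
  qed
  have "{e \<in> E. e \<subseteq> M} \<subseteq> {e \<in> F. e \<subseteq> M}" using EF by blast
  then show "E \<subseteq> glue {e \<in> F. e \<subseteq> V - M} {e \<in> F. e \<subseteq> M} M T"
    using edges_in_glue[OF mt _ NT] by blast
  show "glue {e \<in> F. e \<subseteq> V - M} {e \<in> F. e \<subseteq> M} M T \<subseteq> F"
    using T unfolding glue_def by auto
qed

lemma module_complete_max_clique:
  assumes mt: "minimal_triangulation V E F" and mod: "module V E M"
    and Mcl: "\<forall>x\<in>M. \<forall>y\<in>M. x \<noteq> y \<longrightarrow> {x, y} \<in> F"
    and mc: "maximal_clique V F \<Omega>" and meet: "\<Omega> \<inter> M \<noteq> {}"
  shows "M \<subseteq> \<Omega>"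
proof -
  define T where "T = {x \<in> V - M. \<forall>m\<in>M. {m, x} \<in> F}"
  have MV: "M \<subseteq> V" using mod unfolding module_def by blast
  have parts: "(V - M) \<inter> M = {}" "\<forall>e\<in>{e \<in> F. e \<subseteq> V - M}. e \<subseteq> V - M"
    "\<forall>e\<in>{e \<in> F. e \<subseteq> M}. e \<subseteq> M" "T \<subseteq> V - M" unfolding T_def by auto
  have "maximal_clique V (glue {e \<in> F. e \<subseteq> V - M} {e \<in> F. e \<subseteq> M} M T) \<Omega>"
    using module_complete_triangulation[OF mt mod Mcl T_def] mc by simp
  then show ?thesis using glue_maximal_clique_complete[OF parts _ meet MV] Mcl MV by blast
qed

lemma module_separator_max_clique:
  assumes mt: "minimal_triangulation V E F" and mod: "module V E M"
    and Ncl: "\<forall>x\<in>nbhd V E M. \<forall>y\<in>nbhd V E M. x \<noteq> y \<longrightarrow> {x, y} \<in> F"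
    and mc: "maximal_clique V F \<Omega>" and meet: "\<Omega> \<inter> M \<noteq> {}"
  shows "\<Omega> - M = nbhd V E M" "maximal_clique M {e \<in> F. e \<subseteq> M} (\<Omega> \<inter> M)"
proof -
  let ?A = "{e \<in> F. e \<subseteq> V - M}" and ?B = "{e \<in> F. e \<subseteq> M}" and ?N = "nbhd V E M"
  have ch: "chordal V F" and EF: "E \<subseteq> F" using mt unfolding minimal_triangulation_def by blast+
  have MV: "M \<subseteq> V" using mod unfolding module_def by blast
  have parts: "(V - M) \<inter> M = {}" "\<forall>e\<in>?A. e \<subseteq> V - M" "\<forall>e\<in>?B. e \<subseteq> M" "?N \<subseteq> V - M"
    unfolding nbhd_def by auto
  have "glue ?A ?B M ?N = F"
    using module_separator_triangulation[OF mt mod Ncl chordal_induced[OF ch MV]] EF by blast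
  then have mc': "maximal_clique V (glue ?A ?B M ?N) \<Omega>" using mc by simp
  have NV: "?N \<subseteq> V" and NA: "\<forall>x\<in>?N. \<forall>y\<in>?N. x \<noteq> y \<longrightarrow> {x, y} \<in> ?A"
    using Ncl parts(4) by blast+
  show "\<Omega> - M = ?N" "maximal_clique M ?B (\<Omega> \<inter> M)"
    using glue_maximal_clique[OF parts mc' meet MV NV NA] by blast+
qed

theorem potential_maximal_clique_module:
  assumes pmc: "potential_maximal_clique V E \<Omega>" and mod: "module V E M"
    and meet: "\<Omega> \<inter> M \<noteq> {}" and partial: "\<not> M \<subseteq> \<Omega>"
  shows "potential_maximal_clique M {e \<in> E. e \<subseteq> M} (\<Omega> \<inter> M) \<and> \<Omega> - M = nbhd V E M"
proof -
  obtain F where mt: "minimal_triangulation V E F" and mc: "maximal_clique V F \<Omega>"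
    using pmc unfolding potential_maximal_clique_def by blast
  have ch: "chordal V F" and EF: "E \<subseteq> F" using mt unfolding minimal_triangulation_def by blast+
  obtain a b where ab: "a \<in> M" "b \<in> M" "a \<noteq> b" "{a, b} \<notin> F"
    using module_complete_max_clique[OF mt mod _ mc meet] partial by blast
  then have Ncl: "\<forall>x\<in>nbhd V E M. \<forall>y\<in>nbhd V E M. x \<noteq> y \<longrightarrow> {x, y} \<in> F"
    using module_nbhd_clique[OF ch EF mod] by blast
  have "potential_maximal_clique M {e \<in> E. e \<subseteq> M} (\<Omega> \<inter> M)"
    unfolding potential_maximal_clique_def
    using module_separator_restriction[OF mt mod Ncl] module_separator_max_clique[OF mt mod Ncl mc meet]
    by blast
  then show ?thesis using module_separator_max_clique[OF mt mod Ncl mc meet] by blast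
qed

section \<open>Expansions\<close>

lemma expand_E_cases:
  assumes "e \<in> expand_E I EG Vs Es"
  obtains (inner) j where "j \<in> I" "e \<in> Es j"
    | (outer) a b j l where "e = {a, b}" "j \<in> I" "l \<in> I" "a \<in> Vs j" "b \<in> Vs l" "{j, l} \<in> EG"
  using assms unfolding expand_E_def by blast

lemma expand_E_outerI:
  "j \<in> I \<Longrightarrow> l \<in> I \<Longrightarrow> {j, l} \<in> EG \<Longrightarrow> a \<in> Vs j \<Longrightarrow> b \<in> Vs l \<Longrightarrow>
   {a, b} \<in> expand_E I EG Vs Es"
  unfolding expand_E_def by blast

context
  fixes I :: "'i set" and EG :: "'i set set" and Vs :: "'i \<Rightarrow> 'a set" and Es :: "'i \<Rightarrow> 'a set set"
  assumes part_graphs: "\<forall>j\<in>I. graph (Vs j) (Es j)"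
    and disj: "\<forall>j\<in>I. \<forall>l\<in>I. j \<noteq> l \<longrightarrow> Vs j \<inter> Vs l = {}"
begin

text \<open>Each part V_i of an expansion is a module: a neighbour of V_i is joined to V_i by an
  edge of G, hence to every vertex of V_i.\<close>

lemma expansion_module:
  assumes i: "i \<in> I"
  shows "module (expand_V I Vs) (expand_E I EG Vs Es) (Vs i)"
  unfolding module_def
proof (intro conjI ballI)
  show "Vs i \<subseteq> expand_V I Vs" using i unfolding expand_V_def by blast
  fix m n assume m: "m \<in> Vs i" and n: "n \<in> nbhd (expand_V I Vs) (expand_E I EG Vs Es) (Vs i)"
  obtain x where x: "x \<in> Vs i" "{x, n} \<in> expand_E I EG Vs Es" "n \<notin> Vs i"
    using n unfolding nbhd_def by blast
  have same_part: "j = i" if "j \<in> I" "x \<in> Vs j" for j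
    using disj that i x(1) by blast
  from x(2) show "{m, n} \<in> expand_E I EG Vs Es"
  proof (cases rule: expand_E_cases)
    case (inner j)
    then have "x \<in> Vs j" "n \<in> Vs j" using part_graphs unfolding graph_def by blast+
    then show ?thesis using same_part inner(1) x(3) by blast
  next
    case (outer a b j l)
    then consider "x = a" "n = b" | "x = b" "n = a" by (auto simp: doubleton_eq_iff)
    then show ?thesis
    proof cases
      case 1
      then have "j = i" using same_part outer(2,4) by blast
      then show ?thesis
        using expand_E_outerI[where j = i and l = l and a = m and b = n] outer 1 m i by blast
    next
      case 2
      then have "l = i" using same_part outer(3,5) by blast
      then have "{n, m} \<in> expand_E I EG Vs Es"
        using expand_E_outerI[where j = j and l = i and a = n and b = m] outer 2 m by blast
      then show ?thesis by (simp add: insert_commute)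
    qed
  qed
qed

text \<open>The subgraph of an expansion induced by a part V_i is M_i, since G has no loops.\<close>

lemma expansion_induced:
  assumes gI: "graph I EG" and i: "i \<in> I"
  shows "{e \<in> expand_E I EG Vs Es. e \<subseteq> Vs i} = Es i"
proof (intro equalityI subsetI)
  fix e assume e: "e \<in> Es i"
  have "e \<in> expand_E I EG Vs Es" using e i unfolding expand_E_def by blast
  moreover have "e \<subseteq> Vs i" using e i part_graphs unfolding graph_def by blast
  ultimately show "e \<in> {e \<in> expand_E I EG Vs Es. e \<subseteq> Vs i}" by blast
next
  fix e assume "e \<in> {e \<in> expand_E I EG Vs Es. e \<subseteq> Vs i}"
  then have e: "e \<in> expand_E I EG Vs Es" "e \<subseteq> Vs i" by auto
  from e(1) show "e \<in> Es i"
  proof (cases rule: expand_E_cases)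
    case (inner j)
    have "card e = 2" "e \<subseteq> Vs j" using part_graphs inner unfolding graph_def by auto
    show ?thesis
    proof (cases "j = i")
      case True
      then show ?thesis using inner by simp
    next
      case False
      then have "e = {}" using disj inner(1) i \<open>e \<subseteq> Vs j\<close> e(2) by blast
      then show ?thesis using \<open>card e = 2\<close> by simp
    qed
  next
    case (outer a b j l)
    have "a \<in> Vs i" "b \<in> Vs i" using outer(1) e(2) by auto
    then have "j = i" "l = i" using disj i outer(2-5) by blast+
    then have "{i} \<in> EG" using outer by simp
    then show ?thesis using gI unfolding graph_def by fastforce
  qed
qed

end

theorem lemma7:
  fixes I :: "'i set" and EG :: "'i set set"
    and Vs :: "'i \<Rightarrow> 'a set" and Es :: "'i \<Rightarrow> 'a set set"
    and \<Omega> :: "'a set" and i :: 'i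
  assumes "graph I EG"
    and "\<forall>j\<in>I. graph (Vs j) (Es j)"
    and "\<forall>j\<in>I. \<forall>l\<in>I. j \<noteq> l \<longrightarrow> Vs j \<inter> Vs l = {}"
    and "potential_maximal_clique (expand_V I Vs) (expand_E I EG Vs Es) \<Omega>"
    and "i \<in> I"
    and "\<Omega> \<inter> Vs i \<noteq> {}"
    and "\<not> Vs i \<subseteq> \<Omega>"
  shows "potential_maximal_clique (Vs i) (Es i) (\<Omega> \<inter> Vs i) \<and>
         \<Omega> - Vs i = nbhd (expand_V I Vs) (expand_E I EG Vs Es) (Vs i)"
proof -
  have module: "module (expand_V I Vs) (expand_E I EG Vs Es) (Vs i)"
    using expansion_module[OF assms(2,3,5)] .
  have induced: "{e \<in> expand_E I EG Vs Es. e \<subseteq> Vs i} = Es i"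
    using expansion_induced[OF assms(2,3,1,5)] .
  show ?thesis
    using potential_maximal_clique_module[OF assms(4) module assms(6,7)] unfolding induced .
qed

end
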